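(* Fix a positive integer $N$. For every $\epsilon>0$ there exists $K_\epsilon>0$ such that for every Riemann integrable $\varphi:\mathbb T\to\mathbb C$, $$\limsup_{\substack{q\to\infty\\ d(q)\le N}}\frac{1}{\phi(q)}\Big|\big\{p\in\mathbb Z_q^\times: q^{-1/2}|g_\varphi(p,q)|>K_\epsilon\big\}\Big|\le\epsilon\,\|\varphi\|_2^2 .$$
   Context: $\mathbb T=\mathbb R/\mathbb Z$; $\|\varphi\|_2$ is the $L^2(\mathbb T)$ norm. $d(q)$ is the number of positive divisors of $q$. $\mathbb Z_q^\times=\{p\in\{1,\dots,q\}:\gcd(p,q)=1\}$, $\phi(q)=|\mathbb Z_q^\times|$. $e_q(x)=e^{2\pi i x/q}$ and $g_\varphi(p,q)=\sum_{h=0}^{q-1}\varphi(h/q)\,e_q(ph^2)$. *)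

theory Defs
  imports "HOL-Analysis.Analysis" "HOL-Number_Theory.Totient"
begin

text \<open>Functions on T = R/Z are represented by their values on [0,1) (as functions
real => complex whose values outside [0,1) are irrelevant).\<close>

definition riemann_integrable_real :: "(real \<Rightarrow> real) \<Rightarrow> real \<Rightarrow> real \<Rightarrow> bool" where
  "riemann_integrable_real f a b \<longleftrightarrow>
     bounded (f ` {a..b}) \<and>
     (\<forall>e>0. \<exists>(n::nat) (x::nat \<Rightarrow> real).
        x 0 = a \<and> x n = b \<and> (\<forall>i<n. x i < x (Suc i)) \<and>
        (\<Sum>i<n. (x (Suc i) - x i) *
            (Sup (f ` {x i..x (Suc i)}) - Inf (f ` {x i..x (Suc i)}))) < e)"

definition riemann_integrable_T :: "(real \<Rightarrow> complex) \<Rightarrow> bool" where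
  "riemann_integrable_T \<phi> \<longleftrightarrow>
     riemann_integrable_real (\<lambda>x. Re (\<phi> x)) 0 1 \<and> riemann_integrable_real (\<lambda>x. Im (\<phi> x)) 0 1"

definition L2_norm_sq :: "(real \<Rightarrow> complex) \<Rightarrow> real" where
  "L2_norm_sq \<phi> = integral {0..1} (\<lambda>x. (cmod (\<phi> x))^2)"

definition num_divisors :: "nat \<Rightarrow> nat" where
  "num_divisors q = card {d. 0 < d \<and> d dvd q}"

definition units_mod :: "nat \<Rightarrow> nat set" where
  "units_mod q = {p \<in> {1..q}. coprime p q}"

definition e_q :: "nat \<Rightarrow> real \<Rightarrow> complex" where
  "e_q q x = exp (2 * pi * \<i> * complex_of_real (x / real q))"

definition gsum :: "(real \<Rightarrow> complex) \<Rightarrow> nat \<Rightarrow> nat \<Rightarrow> complex" where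
  "gsum \<phi> p q = (\<Sum>h<q. \<phi> (real h / real q) * e_q q (real (p * h^2)))"

end

theory Submission
  imports Defs
begin

text \<open>
  Orthogonality of the characters p \<mapsto> e_q(p k) turns the second moment
  \<Sum>p |g(p,q)|^2 over p mod q into q times the sum of \<phi>(h/q) * cnj (\<phi>(h'/q)) over the pairs with
  q | h^2 - h'^2. Such a pair splits as d | h - h', q/d | h + h' for some d | q; then
  gcd(d, q/d) divides 2h, and for fixed h and d there are at most gcd(d, q/d) choices of h'.
  By AM-GM the second moment is thus bounded by q times a sum over d | q of gcd(d, q/d) times
  a sum of |\<phi>|^2 over a grid of 2q/gcd(d, q/d) \<ge> \<surd>q points, i.e. a Riemann sum. For large q
  each is at most 2q(\<parallel>\<phi>\<parallel>^2 + \<delta>), so the second moment is at most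
  2 d(q) q^2 (\<parallel>\<phi>\<parallel>^2 + \<delta>). Since q \<le> d(q) totient(q), Chebyshev's inequality bounds the proportion
  of units p with |g(p,q)| > K \<surd>q by 2 N^2 (\<parallel>\<phi>\<parallel>^2 + \<delta>) / K^2.
\<close>

lemma partition_mono:
  fixes x :: "nat \<Rightarrow> real"
  assumes inc: "\<forall>i<m. x i < x (Suc i)" and "i \<le> j" "j \<le> m"
  shows "x i \<le> x j"
  using assms(2,3)
proof (induction j)
  case (Suc j)
  show ?case
  proof (cases "i = Suc j")
    case False
    then have "x i \<le> x j" using Suc by simp
    also have "x j < x (Suc j)" using inc Suc.prems by simp
    finally show ?thesis by simp
  qed simp
qed simp

lemma partition_interval_subset:
  fixes x :: "nat \<Rightarrow> real"
  assumes inc: "\<forall>i<m. x i < x (Suc i)" and "x 0 = 0" "x m = 1" "i < m"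
  shows "x i \<le> x (Suc i)" "{x i..x (Suc i)} \<subseteq> {0..1}"
proof -
  show "x i \<le> x (Suc i)" using inc assms by auto
  moreover have "0 \<le> x i" "x (Suc i) \<le> 1"
    using partition_mono[OF inc, of 0 i] partition_mono[OF inc, of "Suc i" m] assms by simp_all
  ultimately show "{x i..x (Suc i)} \<subseteq> {0..1}" by auto
qed

lemma partition_cover_halfopen:
  fixes x :: "nat \<Rightarrow> real"
  assumes inc: "\<forall>i<m. x i < x (Suc i)" and "x 0 \<le> t" "t < x m"
  shows "\<exists>i<m. x i \<le> t \<and> t < x (Suc i)"
  using assms
proof (induction m)
  case (Suc m)
  show ?case
  proof (cases "t < x m")
    case True
    then obtain i where "i < m" "x i \<le> t \<and> t < x (Suc i)" using Suc by auto
    then show ?thesis by (intro exI[of _ i]) auto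
  next
    case False
    then show ?thesis using Suc.prems by (intro exI[of _ m]) auto
  qed
qed simp

lemma partition_cover:
  fixes x :: "nat \<Rightarrow> real"
  assumes inc: "\<forall>i<m. x i < x (Suc i)" and "x 0 \<le> t" "t \<le> x m" "0 < m"
  shows "\<exists>i<m. x i \<le> t \<and> t \<le> x (Suc i)"
proof (cases "t < x m")
  case True
  then show ?thesis using partition_cover_halfopen[OF inc assms(2)] by fastforce
next
  case False
  then have "t = x m" using assms by simp
  moreover have "x (m - 1) \<le> x m" using partition_mono[OF inc, of "m - 1" m] by simp
  ultimately show ?thesis using assms(4) by (intro exI[of _ "m - 1"]) auto
qed

lemma partition_open_intervals_disjoint:
  fixes x :: "nat \<Rightarrow> real"
  assumes inc: "\<forall>i<m. x i < x (Suc i)" and "i < m" "j < m"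
    and "t \<in> {x i<..<x (Suc i)}" "t \<in> {x j<..<x (Suc j)}"
  shows "i = j"
proof (rule ccontr)
  assume "i \<noteq> j"
  then consider "Suc i \<le> j" | "Suc j \<le> i" by linarith
  then show False
    by cases (use partition_mono[OF inc, of "Suc i" j] partition_mono[OF inc, of "Suc j" i] assms in auto)
qed

lemma card_grid_points_le:
  fixes a b :: real and n :: nat
  assumes "n > 0" "0 \<le> a" "a \<le> b"
  shows "real (card {j \<in> {..<n}. a \<le> real j / real n \<and> real j / real n < b}) \<le> real n * (b - a) + 1"
proof -
  let ?lo = "\<lceil>real n * a\<rceil>" and ?hi = "\<lceil>real n * b\<rceil>"
  have "{j \<in> {..<n}. a \<le> real j / real n \<and> real j / real n < b} \<subseteq> {nat ?lo..<nat ?hi}"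
  proof
    fix j assume "j \<in> {j \<in> {..<n}. a \<le> real j / real n \<and> real j / real n < b}"
    then have "real n * a \<le> real j" "real j < real n * b" using assms(1) by (auto simp: field_simps)
    then have "?lo \<le> int j" "int j < ?hi" by (simp_all add: ceiling_le_iff less_ceiling_iff)
    then show "j \<in> {nat ?lo..<nat ?hi}" by (simp add: nat_le_iff zless_nat_eq_int_zless)
  qed
  then have "card {j \<in> {..<n}. a \<le> real j / real n \<and> real j / real n < b} \<le> nat ?hi - nat ?lo"
    using card_mono[of "{nat ?lo..<nat ?hi}"] by simp
  moreover have "real (nat ?hi - nat ?lo) \<le> real n * (b - a) + 1"
  proof -
    have "0 \<le> real n * a" "real n * a \<le> real n * b" using assms by (simp_all add: mult_left_mono)
    then have "0 \<le> ?lo" "?lo \<le> ?hi" by (simp_all add: ceiling_mono)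
    then have "nat ?hi - nat ?lo = nat (?hi - ?lo)" "0 \<le> ?hi - ?lo" by (simp_all add: nat_diff_distrib)
    then have "real (nat ?hi - nat ?lo) = of_int ?hi - of_int ?lo" by simp
    moreover have "of_int ?hi < real n * b + 1" "real n * a \<le> of_int ?lo" by linarith+
    ultimately show ?thesis by (simp only: right_diff_distrib)
  qed
  ultimately show ?thesis by (meson of_nat_le_iff order_trans)
qed

lemma image_Inf_le_le_Sup:
  fixes f :: "real \<Rightarrow> real"
  assumes bnd: "bounded (f ` S)" and sub: "A \<subseteq> S" and t: "t \<in> A"
  shows "f t \<le> Sup (f ` A)" "Inf (f ` A) \<le> f t"
proof -
  have "bdd_above (f ` A)" "bdd_below (f ` A)"
    using bdd_above_mono[OF bounded_imp_bdd_above[OF bnd] image_mono[OF sub]]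
      bdd_below_mono[OF bounded_imp_bdd_below[OF bnd] image_mono[OF sub]] .
  then show "f t \<le> Sup (f ` A)" "Inf (f ` A) \<le> f t" using t by (auto intro: cSup_upper cInf_lower)
qed

lemma has_integral_const_on_subinterval:
  fixes a b c :: real
  assumes "0 \<le> a" "a \<le> b" "b \<le> 1"
  shows "((\<lambda>t. if t \<in> {a..b} then c else 0) has_integral c * (b - a)) {0..1}"
proof -
  have "((\<lambda>t. c) has_integral c * (b - a)) {a..b}"
    using has_integral_const_real[of c a b] assms by (simp add: mult.commute)
  then show ?thesis using assms by (subst has_integral_restrict) auto
qed

lemma has_integral_const_on_open_subinterval:
  fixes a b c :: real
  assumes "0 \<le> a" "a \<le> b" "b \<le> 1"
  shows "((\<lambda>t. if t \<in> {a<..<b} then c else 0) has_integral c * (b - a)) {0..1}"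
  by (rule has_integral_spike_finite[OF _ _ has_integral_const_on_subinterval[OF assms, of c],
        where S = "{a, b}"]) auto

context
  fixes f :: "real \<Rightarrow> real" and x :: "nat \<Rightarrow> real" and m :: nat
  assumes inc: "\<forall>i<m. x i < x (Suc i)" and x0: "x 0 = 0" and xm: "x m = 1"
    and nonneg: "\<And>t. t \<in> {0..1} \<Longrightarrow> 0 \<le> f t" and bnd: "bounded (f ` {0..1})"
begin

private lemma f_le_Sup: "i < m \<Longrightarrow> t \<in> {x i..x (Suc i)} \<Longrightarrow> f t \<le> Sup (f ` {x i..x (Suc i)})"
  and Inf_le_f: "i < m \<Longrightarrow> t \<in> {x i..x (Suc i)} \<Longrightarrow> Inf (f ` {x i..x (Suc i)}) \<le> f t"
  using image_Inf_le_le_Sup[OF bnd partition_interval_subset(2)[OF inc x0 xm]] by auto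

private lemma Sup_nonneg: "i < m \<Longrightarrow> 0 \<le> Sup (f ` {x i..x (Suc i)})"
  using f_le_Sup[of i "x i"] nonneg[of "x i"] partition_interval_subset[OF inc x0 xm, of i] by auto

lemma upper_darboux_step_function:
  "\<exists>h. (h has_integral (\<Sum>i<m. Sup (f ` {x i..x (Suc i)}) * (x (Suc i) - x i))) {0..1} \<and>
       (\<forall>t\<in>{0..1}. f t \<le> h t)"
proof (intro exI conjI ballI)
  let ?Su = "\<lambda>i. Sup (f ` {x i..x (Suc i)})"
  note P = partition_interval_subset[OF inc x0 xm]
  show "((\<lambda>t. \<Sum>i<m. if t \<in> {x i..x (Suc i)} then ?Su i else 0)
          has_integral (\<Sum>i<m. ?Su i * (x (Suc i) - x i))) {0..1}"
    using P by (intro has_integral_sum finite_lessThan has_integral_const_on_subinterval) auto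
  fix t :: real assume t: "t \<in> {0..1}"
  have "0 < m" using x0 xm by (cases m) auto
  then obtain i where i: "i < m" "t \<in> {x i..x (Suc i)}"
    using partition_cover[OF inc, of t] t x0 xm by auto
  have "f t \<le> (if t \<in> {x i..x (Suc i)} then ?Su i else 0)" using f_le_Sup[OF i] i by simp
  also have "\<dots> \<le> (\<Sum>i<m. if t \<in> {x i..x (Suc i)} then ?Su i else 0)"
    by (rule member_le_sum) (use i Sup_nonneg in auto)
  finally show "f t \<le> (\<Sum>i<m. if t \<in> {x i..x (Suc i)} then ?Su i else 0)" .
qed

lemma lower_darboux_step_function:
  "\<exists>g. (g has_integral (\<Sum>i<m. Inf (f ` {x i..x (Suc i)}) * (x (Suc i) - x i))) {0..1} \<and>
       (\<forall>t\<in>{0..1}. g t \<le> f t)"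
proof (intro exI conjI ballI)
  let ?In = "\<lambda>i. Inf (f ` {x i..x (Suc i)})"
  note P = partition_interval_subset[OF inc x0 xm]
  show "((\<lambda>t. \<Sum>i<m. if t \<in> {x i<..<x (Suc i)} then ?In i else 0)
          has_integral (\<Sum>i<m. ?In i * (x (Suc i) - x i))) {0..1}"
    using P by (intro has_integral_sum finite_lessThan has_integral_const_on_open_subinterval) auto
  fix t :: real assume t: "t \<in> {0..1}"
  show "(\<Sum>i<m. if t \<in> {x i<..<x (Suc i)} then ?In i else 0) \<le> f t"
  proof (cases "\<exists>k<m. t \<in> {x k<..<x (Suc k)}")
    case True
    then obtain k where k: "k < m" "t \<in> {x k<..<x (Suc k)}" by auto
    \<comment> \<open>the open subintervals are disjoint, so only the term of index k survives\<close>
    have "(\<Sum>i<m. if t \<in> {x i<..<x (Suc i)} then ?In i else 0)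
        = (\<Sum>i\<in>{k}. if t \<in> {x i<..<x (Suc i)} then ?In i else 0)"
    proof (rule sum.mono_neutral_right)
      show "\<forall>i\<in>{..<m} - {k}. (if t \<in> {x i<..<x (Suc i)} then ?In i else 0) = 0"
        using partition_open_intervals_disjoint[OF inc _ k(1) _ k(2)] by fastforce
    qed (use k in auto)
    also have "\<dots> \<le> f t" using Inf_le_f[OF k(1)] k by auto
    finally show ?thesis .
  next
    case False
    then have "(\<Sum>i<m. if t \<in> {x i<..<x (Suc i)} then ?In i else 0) = 0" by (intro sum.neutral) auto
    then show ?thesis using nonneg t by simp
  qed
qed

lemma sample_sum_le_upper_darboux:
  assumes n: "n > 0"
  shows "(\<Sum>j<n. f (real j / real n))
    \<le> real n * (\<Sum>i<m. Sup (f ` {x i..x (Suc i)}) * (x (Suc i) - x i)) + (\<Sum>i<m. Sup (f ` {x i..x (Suc i)}))"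
proof -
  let ?Su = "\<lambda>i. Sup (f ` {x i..x (Suc i)})"
  let ?in = "\<lambda>i j. x i \<le> real j / real n \<and> real j / real n < x (Suc i)"
  note P = partition_interval_subset[OF inc x0 xm]
  have "(\<Sum>j<n. f (real j / real n)) \<le> (\<Sum>j<n. \<Sum>i<m. if ?in i j then ?Su i else 0)"
  proof (rule sum_mono)
    fix j assume j: "j \<in> {..<n}"
    then have "0 \<le> real j / real n" "real j / real n < 1" by auto
    then obtain i where i: "i < m" "?in i j"
      using partition_cover_halfopen[OF inc, of "real j / real n"] x0 xm by auto
    have "f (real j / real n) \<le> (if ?in i j then ?Su i else 0)" using f_le_Sup[OF i(1)] i by simp
    also have "\<dots> \<le> (\<Sum>i<m. if ?in i j then ?Su i else 0)"
      by (rule member_le_sum) (use i Sup_nonneg in auto)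
    finally show "f (real j / real n) \<le> (\<Sum>i<m. if ?in i j then ?Su i else 0)" .
  qed
  also have "\<dots> = (\<Sum>i<m. \<Sum>j<n. if ?in i j then ?Su i else 0)"
    by (rule sum.swap)
  also have "\<dots> = (\<Sum>i<m. ?Su i * real (card {j \<in> {..<n}. ?in i j}))"
    by (simp add: sum.inter_filter[symmetric] mult.commute)
  also have "\<dots> \<le> (\<Sum>i<m. ?Su i * (real n * (x (Suc i) - x i) + 1))"
  proof (intro sum_mono mult_left_mono card_grid_points_le n)
    fix i assume "i \<in> {..<m}"
    then show "0 \<le> x i" "x i \<le> x (Suc i)" "0 \<le> ?Su i" using P Sup_nonneg by auto
  qed
  also have "\<dots> = (\<Sum>i<m. real n * (?Su i * (x (Suc i) - x i)) + ?Su i)"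
    by (simp add: algebra_simps)
  also have "\<dots> = real n * (\<Sum>i<m. ?Su i * (x (Suc i) - x i)) + (\<Sum>i<m. ?Su i)"
    by (simp add: sum.distrib sum_distrib_left)
  finally show ?thesis .
qed

end

lemma riemann_integrable_real_sandwich:
  fixes f :: "real \<Rightarrow> real"
  assumes nonneg: "\<And>t. t \<in> {0..1} \<Longrightarrow> 0 \<le> f t" and ri: "riemann_integrable_real f 0 1"
    and e: "e > 0"
  obtains g lo h up C where "(g has_integral lo) {0..1}" "(h has_integral up) {0..1}" "up - lo < e"
    "\<forall>t\<in>{0..1}. g t \<le> f t \<and> f t \<le> h t" "\<forall>n>0. (\<Sum>j<n. f (real j / real n)) \<le> real n * up + C"
proof -
  have bnd: "bounded (f ` {0..1})" using ri unfolding riemann_integrable_real_def by simp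
  obtain m x where x: "x 0 = 0" "x m = 1" "\<forall>i<m. x i < x (Suc i)"
    and gap: "(\<Sum>i<m. (x (Suc i) - x i) * (Sup (f ` {x i..x (Suc i)}) - Inf (f ` {x i..x (Suc i)}))) < e"
    using ri e unfolding riemann_integrable_real_def by blast
  obtain h where h: "(h has_integral (\<Sum>i<m. Sup (f ` {x i..x (Suc i)}) * (x (Suc i) - x i))) {0..1}"
      "\<forall>t\<in>{0..1}. f t \<le> h t"
    using upper_darboux_step_function[OF x(3,1,2) nonneg bnd] by blast
  obtain g where g: "(g has_integral (\<Sum>i<m. Inf (f ` {x i..x (Suc i)}) * (x (Suc i) - x i))) {0..1}"
      "\<forall>t\<in>{0..1}. g t \<le> f t"
    using lower_darboux_step_function[OF x(3,1,2) nonneg bnd] by blast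
  have "(\<Sum>i<m. Sup (f ` {x i..x (Suc i)}) * (x (Suc i) - x i))
      - (\<Sum>i<m. Inf (f ` {x i..x (Suc i)}) * (x (Suc i) - x i)) < e"
    using gap by (simp add: sum_subtractf[symmetric] algebra_simps)
  then show ?thesis
    using that[OF g(1) h(1)] g(2) h(2) sample_sum_le_upper_darboux[OF x(3,1,2) nonneg bnd] by blast
qed

lemma riemann_integrable_real_integrable_on:
  fixes f :: "real \<Rightarrow> real"
  assumes nonneg: "\<And>t. t \<in> {0..1} \<Longrightarrow> 0 \<le> f t" and ri: "riemann_integrable_real f 0 1"
  shows "f integrable_on {0..1}"
proof (rule integrable_straddle)
  fix e :: real assume "e > 0"
  obtain g h lo up C where "(g has_integral lo) {0..1}" "(h has_integral up) {0..1}" "up - lo < e"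
    and gh: "\<forall>t\<in>{0..1}. g t \<le> f t \<and> f t \<le> h t"
    and "\<forall>n>0. (\<Sum>j<n. f (real j / real n)) \<le> real n * up + C"
    by (rule riemann_integrable_real_sandwich[OF nonneg ri \<open>e > 0\<close>])
  moreover have "lo \<le> up"
    by (rule has_integral_le[OF \<open>(g has_integral lo) {0..1}\<close> \<open>(h has_integral up) {0..1}\<close>])
      (use gh in \<open>fastforce intro: order_trans\<close>)
  ultimately show "\<exists>g h i j. (g has_integral i) {0..1} \<and> (h has_integral j) {0..1} \<and> \<bar>i - j\<bar> < e \<and>
      (\<forall>t\<in>{0..1}. g t \<le> f t \<and> f t \<le> h t)"
    using gh by (intro exI[of _ g] exI[of _ h] exI[of _ lo] exI[of _ up]) auto
qed

lemma riemann_integrable_real_sample_sum_le: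
  fixes f :: "real \<Rightarrow> real"
  assumes nonneg: "\<And>t. t \<in> {0..1} \<Longrightarrow> 0 \<le> f t" and ri: "riemann_integrable_real f 0 1"
    and \<delta>: "\<delta> > 0"
  shows "eventually (\<lambda>n. (\<Sum>j<n. f (real j / real n)) \<le> real n * (integral {0..1} f + \<delta>)) sequentially"
proof -
  obtain g h lo up C where g: "(g has_integral lo) {0..1}" and "(h has_integral up) {0..1}"
    and "up - lo < \<delta> / 2" and gh: "\<forall>t\<in>{0..1}. g t \<le> f t \<and> f t \<le> h t"
    and sample: "\<forall>n>0. (\<Sum>j<n. f (real j / real n)) \<le> real n * up + C"
    by (rule riemann_integrable_real_sandwich[OF nonneg ri half_gt_zero[OF \<delta>]])
  moreover have "lo \<le> integral {0..1} f"
    using has_integral_le[OF g integrable_integral[OF riemann_integrable_real_integrable_on[OF nonneg ri]]] gh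
    by force
  ultimately have up: "up \<le> integral {0..1} f + \<delta> / 2" by simp
  have "eventually (\<lambda>n. 2 * C / \<delta> \<le> real n) sequentially"
    using filterlim_real_sequentially by (simp add: filterlim_at_top)
  then show ?thesis using eventually_gt_at_top[of 0]
  proof eventually_elim
    case (elim n)
    then have "C \<le> real n * (\<delta> / 2)" using \<delta> by (simp add: field_simps)
    moreover have "real n * up \<le> real n * (integral {0..1} f + \<delta> / 2)" using up by (simp add: mult_left_mono)
    moreover have "(\<Sum>j<n. f (real j / real n)) \<le> real n * up + C" using sample elim(2) by blast
    ultimately show ?case by (simp add: algebra_simps)
  qed
qed

lemma oscillation_power2_le:
  fixes w :: "real \<Rightarrow> real"
  assumes bnd: "bounded (w ` S)" and B: "\<And>t. t \<in> S \<Longrightarrow> \<bar>w t\<bar> \<le> B"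
    and sub: "A \<subseteq> S" and ne: "A \<noteq> {}"
  shows "Sup ((\<lambda>t. (w t)\<^sup>2) ` A) - Inf ((\<lambda>t. (w t)\<^sup>2) ` A) \<le> 2 * B * (Sup (w ` A) - Inf (w ` A))"
proof -
  let ?C = "2 * B * (Sup (w ` A) - Inf (w ` A))"
  note SI = image_Inf_le_le_Sup[OF bnd sub]
  have st: "(w s)\<^sup>2 \<le> (w t)\<^sup>2 + ?C" if "s \<in> A" "t \<in> A" for s t
  proof -
    have "(w s)\<^sup>2 - (w t)\<^sup>2 = (w s - w t) * (w s + w t)" by (simp add: power2_eq_square algebra_simps)
    also have "\<dots> \<le> \<bar>w s - w t\<bar> * \<bar>w s + w t\<bar>" by (metis abs_ge_self abs_mult)
    also have "\<dots> \<le> (Sup (w ` A) - Inf (w ` A)) * (2 * B)"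
      using SI[OF that(1)] SI[OF that(2)] B[of s] B[of t] that sub by (intro mult_mono) force+
    finally show ?thesis by (simp add: algebra_simps)
  qed
  have "Sup ((\<lambda>t. (w t)\<^sup>2) ` A) \<le> (w t)\<^sup>2 + ?C" if "t \<in> A" for t
    using st[OF _ that] ne by (intro cSup_least) auto
  then have "Sup ((\<lambda>t. (w t)\<^sup>2) ` A) - ?C \<le> Inf ((\<lambda>t. (w t)\<^sup>2) ` A)"
    using ne by (intro cInf_greatest) force+
  then show ?thesis by simp
qed

lemma riemann_integrable_real_power2:
  fixes w :: "real \<Rightarrow> real"
  assumes ri: "riemann_integrable_real w 0 1"
  shows "riemann_integrable_real (\<lambda>t. (w t)\<^sup>2) 0 1"
proof -
  have bnd: "bounded (w ` {0..1})" using ri unfolding riemann_integrable_real_def by simp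
  then obtain B0 where B0: "\<forall>y\<in>w ` {0..1}. norm y \<le> B0" by (auto simp: bounded_iff)
  define B where "B = \<bar>B0\<bar> + 1"
  have B: "\<And>t. t \<in> {0..1} \<Longrightarrow> \<bar>w t\<bar> \<le> B" and Bpos: "B > 0"
    using B0 unfolding B_def by force+
  have "bounded ((\<lambda>t. (w t)\<^sup>2) ` {0..1})"
    unfolding bounded_iff
  proof (intro exI ballI)
    fix y assume "y \<in> (\<lambda>t. (w t)\<^sup>2) ` {0..1}"
    then obtain t where t: "t \<in> {0..1}" "y = (w t)\<^sup>2" by auto
    have "\<bar>w t\<bar> * \<bar>w t\<bar> \<le> B * B" using B[OF t(1)] by (intro mult_mono) auto
    then show "norm y \<le> B * B" using t by (simp add: power2_eq_square abs_mult)
  qed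
  moreover have "\<exists>(m::nat) (x::nat \<Rightarrow> real). x 0 = 0 \<and> x m = 1 \<and> (\<forall>i<m. x i < x (Suc i)) \<and>
      (\<Sum>i<m. (x (Suc i) - x i) *
         (Sup ((\<lambda>t. (w t)\<^sup>2) ` {x i..x (Suc i)}) - Inf ((\<lambda>t. (w t)\<^sup>2) ` {x i..x (Suc i)}))) < e"
    if e: "e > 0" for e
  proof -
    obtain m x where x: "x 0 = 0" "x m = 1" "\<forall>i<m. x i < x (Suc i)"
      and gap: "(\<Sum>i<m. (x (Suc i) - x i) * (Sup (w ` {x i..x (Suc i)}) - Inf (w ` {x i..x (Suc i)})))
          < e / (2 * B)"
      using ri[unfolded riemann_integrable_real_def, THEN conjunct2, rule_format, of "e / (2 * B)"] e Bpos
      by auto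
    note P = partition_interval_subset[OF x(3,1,2)]
    have "(\<Sum>i<m. (x (Suc i) - x i) *
           (Sup ((\<lambda>t. (w t)\<^sup>2) ` {x i..x (Suc i)}) - Inf ((\<lambda>t. (w t)\<^sup>2) ` {x i..x (Suc i)})))
        \<le> (\<Sum>i<m. (2 * B) * ((x (Suc i) - x i) * (Sup (w ` {x i..x (Suc i)}) - Inf (w ` {x i..x (Suc i)}))))"
    proof (rule sum_mono)
      fix i assume "i \<in> {..<m}"
      then have i: "i < m" by simp
      have "(x (Suc i) - x i) *
            (Sup ((\<lambda>t. (w t)\<^sup>2) ` {x i..x (Suc i)}) - Inf ((\<lambda>t. (w t)\<^sup>2) ` {x i..x (Suc i)}))
          \<le> (x (Suc i) - x i) * (2 * B * (Sup (w ` {x i..x (Suc i)}) - Inf (w ` {x i..x (Suc i)})))"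
        using oscillation_power2_le[OF bnd B P(2)[OF i]] P(1)[OF i] by (intro mult_left_mono) auto
      then show "(x (Suc i) - x i) *
            (Sup ((\<lambda>t. (w t)\<^sup>2) ` {x i..x (Suc i)}) - Inf ((\<lambda>t. (w t)\<^sup>2) ` {x i..x (Suc i)}))
          \<le> (2 * B) * ((x (Suc i) - x i) * (Sup (w ` {x i..x (Suc i)}) - Inf (w ` {x i..x (Suc i)})))"
        by (simp only: mult_ac)
    qed
    also have "\<dots> < (2 * B) * (e / (2 * B))"
      unfolding sum_distrib_left[symmetric] using gap Bpos by (intro mult_strict_left_mono) auto
    also have "\<dots> = e" using Bpos by simp
    finally show ?thesis using x by (intro exI[of _ m] exI[of _ x]) simp
  qed
  ultimately show ?thesis unfolding riemann_integrable_real_def by (intro conjI allI impI) auto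
qed

lemma riemann_integrable_T_L2_norm_sq:
  fixes \<phi> :: "real \<Rightarrow> complex"
  assumes ri: "riemann_integrable_T \<phi>"
  shows "0 \<le> L2_norm_sq \<phi>"
    and "\<delta> > 0 \<Longrightarrow> eventually (\<lambda>n. (\<Sum>j<n. (cmod (\<phi> (real j / real n)))\<^sup>2) \<le> real n * (L2_norm_sq \<phi> + \<delta>))
        sequentially"
proof -
  let ?u = "\<lambda>t. (Re (\<phi> t))\<^sup>2" and ?v = "\<lambda>t. (Im (\<phi> t))\<^sup>2"
  have ru: "riemann_integrable_real ?u 0 1" and rv: "riemann_integrable_real ?v 0 1"
    using ri riemann_integrable_real_power2 unfolding riemann_integrable_T_def by blast+
  have iu: "?u integrable_on {0..1}" and iv: "?v integrable_on {0..1}"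
    using riemann_integrable_real_integrable_on ru rv by auto
  have L: "L2_norm_sq \<phi> = integral {0..1} ?u + integral {0..1} ?v"
    unfolding L2_norm_sq_def cmod_power2 by (rule integral_add[OF iu iv])
  show "0 \<le> L2_norm_sq \<phi>" unfolding L
    using integral_nonneg[OF iu] integral_nonneg[OF iv] by fastforce
  assume "\<delta> > 0"
  have "eventually (\<lambda>n. (\<Sum>j<n. ?u (real j / real n)) \<le> real n * (integral {0..1} ?u + \<delta> / 2)) sequentially"
    "eventually (\<lambda>n. (\<Sum>j<n. ?v (real j / real n)) \<le> real n * (integral {0..1} ?v + \<delta> / 2)) sequentially"
    using riemann_integrable_real_sample_sum_le[OF _ ru] riemann_integrable_real_sample_sum_le[OF _ rv]
      \<open>\<delta> > 0\<close> by simp_all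
  then show "eventually (\<lambda>n. (\<Sum>j<n. (cmod (\<phi> (real j / real n)))\<^sup>2) \<le> real n * (L2_norm_sq \<phi> + \<delta>))
      sequentially"
    by eventually_elim (simp add: L cmod_power2 sum.distrib algebra_simps)
qed

lemma e_q_of_int_mult: "e_q q (of_int (int p * k)) = e_q q (of_int k) ^ p"
proof -
  have "e_q q (of_int (int p * k)) = exp (of_nat p * (2 * pi * \<i> * complex_of_real (of_int k / real q)))"
    unfolding e_q_def by (simp add: algebra_simps)
  also have "\<dots> = e_q q (of_int k) ^ p" unfolding e_q_def by (rule exp_of_nat_mult)
  finally show ?thesis .
qed

lemma e_q_of_int_eq_1_iff:
  assumes "q > 0"
  shows "e_q q (of_int k) = 1 \<longleftrightarrow> int q dvd k"
proof -
  have "e_q q (of_int k) = 1 \<longleftrightarrow> (\<exists>n::int. 2 * pi * (of_int k / real q) = of_int (2 * n) * pi)"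
    unfolding e_q_def exp_eq_1 by simp
  also have "\<dots> \<longleftrightarrow> (\<exists>n::int. real_of_int k = of_int n * real q)"
    using assms by (intro ex_cong1) (auto simp: field_simps)
  also have "\<dots> \<longleftrightarrow> (\<exists>n::int. k = n * int q)"
    by (intro ex_cong1) (metis of_int_eq_iff of_int_mult of_int_of_nat_eq)
  also have "\<dots> \<longleftrightarrow> int q dvd k" by (auto simp: dvd_def mult.commute)
  finally show ?thesis .
qed

lemma sum_e_q_of_int_mult:
  assumes q: "q > 0"
  shows "(\<Sum>p\<in>{1..q}. e_q q (of_int (int p * k))) = (if int q dvd k then of_nat q else 0)"
proof -
  let ?z = "e_q q (of_int k)"
  have "?z ^ q = 1"
    using e_q_of_int_mult[of q q k] e_q_of_int_eq_1_iff[OF q, of "int q * k"] by simp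
  moreover have "(\<Sum>p\<in>{1..q}. e_q q (of_int (int p * k))) = (\<Sum>p\<in>{Suc 0..q}. ?z ^ p)"
    by (simp only: e_q_of_int_mult One_nat_def)
  moreover have "\<dots> = ?z * (\<Sum>p<q. ?z ^ p)"
    by (simp only: sum.atLeast1_atMost_eq sum_distrib_left power_Suc)
  ultimately show ?thesis
    using e_q_of_int_eq_1_iff[OF q, of k] by (auto simp: sum_gp_strict)
qed

lemma e_q_mult_cnj:
  "e_q q (real (p * h^2)) * cnj (e_q q (real (p * h'^2))) = e_q q (of_int (int p * (int h^2 - int h'^2)))"
proof -
  have "e_q q (real (p * h^2)) * cnj (e_q q (real (p * h'^2)))
      = exp (2 * pi * \<i> * complex_of_real (real (p * h^2) / real q)
             + cnj (2 * pi * \<i> * complex_of_real (real (p * h'^2) / real q)))"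
    unfolding e_q_def by (simp only: exp_cnj mult_exp_exp)
  also have "\<dots> = e_q q (of_int (int p * (int h^2 - int h'^2)))"
    unfolding e_q_def by (rule arg_cong[where f = exp], cases "q = 0") (simp_all add: field_simps)
  finally show ?thesis .
qed

lemma sum_norm_gsum_power2:
  fixes \<phi> :: "real \<Rightarrow> complex"
  assumes q: "q > 0"
  defines "a \<equiv> \<lambda>h. \<phi> (real h / real q)"
  shows "complex_of_real (\<Sum>p\<in>{1..q}. (cmod (gsum \<phi> p q))\<^sup>2)
     = of_nat q * (\<Sum>h<q. \<Sum>h'<q. if int q dvd (int h^2 - int h'^2) then a h * cnj (a h') else 0)"
proof -
  let ?E = "\<lambda>p h h'. e_q q (of_int (int p * (int h^2 - int h'^2)))"
  have "complex_of_real (\<Sum>p\<in>{1..q}. (cmod (gsum \<phi> p q))\<^sup>2) = (\<Sum>p\<in>{1..q}. gsum \<phi> p q * cnj (gsum \<phi> p q))"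
    by (simp only: of_real_sum complex_norm_square)
  also have "\<dots> = (\<Sum>p\<in>{1..q}. \<Sum>h<q. \<Sum>h'<q. a h * cnj (a h') * ?E p h h')"
  proof (rule sum.cong[OF refl])
    fix p
    have "gsum \<phi> p q * cnj (gsum \<phi> p q)
        = (\<Sum>h<q. \<Sum>h'<q. (a h * e_q q (real (p * h^2))) * cnj (a h' * e_q q (real (p * h'^2))))"
      unfolding gsum_def a_def by (simp add: sum_product cnj_sum)
    also have "\<dots> = (\<Sum>h<q. \<Sum>h'<q. a h * cnj (a h') * ?E p h h')"
      by (intro sum.cong refl) (simp only: e_q_mult_cnj[symmetric] complex_cnj_mult mult_ac)
    finally show "gsum \<phi> p q * cnj (gsum \<phi> p q) = (\<Sum>h<q. \<Sum>h'<q. a h * cnj (a h') * ?E p h h')" .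
  qed
  also have "\<dots> = (\<Sum>h<q. \<Sum>h'<q. \<Sum>p\<in>{1..q}. a h * cnj (a h') * ?E p h h')"
    by (subst sum.swap) (rule sum.cong[OF refl], rule sum.swap)
  also have "\<dots> = (\<Sum>h<q. \<Sum>h'<q. of_nat q * (if int q dvd (int h^2 - int h'^2) then a h * cnj (a h') else 0))"
    by (intro sum.cong refl) (simp only: sum_distrib_left[symmetric] sum_e_q_of_int_mult[OF q], simp)
  also have "\<dots> = of_nat q * (\<Sum>h<q. \<Sum>h'<q. if int q dvd (int h^2 - int h'^2) then a h * cnj (a h') else 0)"
    by (simp add: sum_distrib_left)
  finally show ?thesis .
qed

lemma int_dvd_mult_split:
  fixes u v :: int
  assumes q: "q > 0" and dv: "int q dvd u * v"
  obtains d where "d > 0" "d dvd q" "int d dvd u" "int (q div d) dvd v"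
proof -
  define G where "G = gcd u (int q)"
  have Gpos: "G > 0" using q unfolding G_def by simp
  define d where "d = nat G"
  have dG: "int d = G" using Gpos unfolding d_def by simp
  have "G dvd int q" unfolding G_def by simp
  then have dq: "d dvd q" using dG by (metis of_nat_dvd_iff)
  have du: "int d dvd u" using dG unfolding G_def by simp
  have cop: "coprime (u div G) (int q div G)" unfolding G_def using q by (intro div_gcd_coprime) simp
  have "int q = G * (int q div G)" using \<open>G dvd int q\<close> by simp
  moreover have "u = G * (u div G)" using du dG by simp
  ultimately have "G * (int q div G) dvd G * ((u div G) * v)" using dv by (metis mult.assoc)
  then have "int q div G dvd (u div G) * v" using Gpos by simp
  then have "int q div G dvd v" using cop by (simp add: coprime_commute coprime_dvd_mult_right_iff)
  moreover have "int (q div d) = int q div G" using dG by (simp add: zdiv_int)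
  ultimately have "int (q div d) dvd v" by simp
  then show ?thesis using that[OF _ dq du] Gpos d_def by simp
qed

lemma card_dvd_diff_dvd_add_le:
  assumes d: "d > 0" "d dvd q" and q: "q > 0"
  defines "e \<equiv> q div d"
  defines "g \<equiv> gcd d e"
  shows "card {h' \<in> {..<q}. int d dvd (int h - int h') \<and> int e dvd (int h + int h')}
    \<le> (if g dvd 2 * h then g else 0)"
proof (cases "{h' \<in> {..<q}. int d dvd (int h - int h') \<and> int e dvd (int h + int h')} = {}")
  case False
  let ?A = "{h' \<in> {..<q}. int d dvd (int h - int h') \<and> int e dvd (int h + int h')}"
  obtain h0 where h0: "h0 < q" "int d dvd (int h - int h0)" "int e dvd (int h + int h0)"
    using False by auto
  have gd: "int g dvd int d" "int g dvd int e" unfolding g_def by (simp_all add: of_nat_dvd_iff)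
  have "int g dvd (int h - int h0) + (int h + int h0)"
    using dvd_trans[OF gd(1) h0(2)] dvd_trans[OF gd(2) h0(3)] by (rule dvd_add)
  then have "int g dvd int (2 * h)" by simp
  then have "g dvd 2 * h" by (simp only: of_nat_dvd_iff)
  \<comment> \<open>all solutions are congruent to h0 modulo lcm d e = q / g, so there are at most g of them\<close>
  define L where "L = lcm d e"
  have "q = d * e" unfolding e_def using d by simp
  then have Lg: "L * g = q" unfolding L_def g_def by (simp add: lcm_nat_def)
  have Lpos: "L > 0" using Lg q by (cases L) auto
  have modL: "h' mod L = h0 mod L" if "h' \<in> ?A" for h'
  proof -
    have "int d dvd int h' - int h0" "int e dvd int h' - int h0"
      using dvd_diff[OF h0(2), of "int h - int h'"] dvd_diff[of "int e" "int h + int h'" "int h + int h0"] that h0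
      by auto
    then have "lcm (int d) (int e) dvd int h' - int h0" by (rule lcm_least)
    then have "int h' mod int L = int h0 mod int L" unfolding L_def by (simp add: lcm_int_int_eq mod_eq_dvd_iff)
    then show ?thesis by (simp flip: zmod_int)
  qed
  have "inj_on (\<lambda>h'. h' div L) ?A"
  proof
    fix x y assume xy: "x \<in> ?A" "y \<in> ?A" "x div L = y div L"
    have "x = x div L * L + x mod L" by simp
    also have "\<dots> = y div L * L + y mod L" using xy modL by simp
    finally show "x = y" by simp
  qed
  moreover have "(\<lambda>h'. h' div L) ` ?A \<subseteq> {..<g}"
    using Lg Lpos by (auto simp: div_less_iff_less_mult mult.commute)
  ultimately have "card ?A \<le> g" using card_inj_on_le[of _ ?A "{..<g}"] by simp
  then show ?thesis using \<open>g dvd 2 * h\<close> by simp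
qed (simp only: card.empty zero_le)

lemma card_square_congruent_le:
  assumes q: "q > 0"
  shows "real (card {h' \<in> {..<q}. int q dvd (int h^2 - int h'^2)})
     \<le> (\<Sum>d\<in>{d. 0 < d \<and> d dvd q}. if gcd d (q div d) dvd 2 * h then real (gcd d (q div d)) else 0)"
proof -
  let ?D = "{d. 0 < d \<and> d dvd q}"
  let ?A = "\<lambda>d. {h' \<in> {..<q}. int d dvd (int h - int h') \<and> int (q div d) dvd (int h + int h')}"
  have finD: "finite ?D" using finite_divisors_nat[OF q] by (rule finite_subset[rotated]) auto
  have "{h' \<in> {..<q}. int q dvd (int h^2 - int h'^2)} \<subseteq> (\<Union>d\<in>?D. ?A d)"
  proof
    fix h' assume h': "h' \<in> {h' \<in> {..<q}. int q dvd (int h^2 - int h'^2)}"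
    have "int h^2 - int h'^2 = (int h - int h') * (int h + int h')" by (simp add: power2_eq_square algebra_simps)
    then obtain d where "d > 0" "d dvd q" "int d dvd (int h - int h')" "int (q div d) dvd (int h + int h')"
      using int_dvd_mult_split[OF q] h' by auto
    then show "h' \<in> (\<Union>d\<in>?D. ?A d)" using h' by auto
  qed
  then have "card {h' \<in> {..<q}. int q dvd (int h^2 - int h'^2)} \<le> card (\<Union>d\<in>?D. ?A d)"
    by (rule card_mono[rotated]) (auto intro: finite_subset[of _ "{..<q}"])
  also have "\<dots> \<le> (\<Sum>d\<in>?D. card (?A d))" by (rule card_UN_le[OF finD])
  finally have "real (card {h' \<in> {..<q}. int q dvd (int h^2 - int h'^2)}) \<le> (\<Sum>d\<in>?D. real (card (?A d)))"
    by (simp flip: of_nat_sum)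
  also have "\<dots> \<le> (\<Sum>d\<in>?D. if gcd d (q div d) dvd 2 * h then real (gcd d (q div d)) else 0)"
  proof (rule sum_mono)
    fix d assume "d \<in> ?D"
    then have "card (?A d) \<le> (if gcd d (q div d) dvd 2 * h then gcd d (q div d) else 0)"
      using card_dvd_diff_dvd_add_le[OF _ _ q] by simp
    then show "real (card (?A d)) \<le> (if gcd d (q div d) dvd 2 * h then real (gcd d (q div d)) else 0)"
      by (simp split: if_splits)
  qed
  finally show ?thesis .
qed

lemma sum_symmetric_pairs_le:
  fixes c :: "'a \<Rightarrow> real"
  assumes "finite A" and sym: "\<And>x y. R x y \<longleftrightarrow> R y x"
  shows "(\<Sum>x\<in>A. \<Sum>y\<in>A. if R x y then c x * c y else 0) \<le> (\<Sum>x\<in>A. (c x)\<^sup>2 * real (card {y \<in> A. R x y}))"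
proof -
  have "(\<Sum>x\<in>A. \<Sum>y\<in>A. if R x y then c x * c y else 0)
      \<le> (\<Sum>x\<in>A. \<Sum>y\<in>A. (if R x y then (c x)\<^sup>2 else 0) / 2 + (if R x y then (c y)\<^sup>2 else 0) / 2)"
  proof (intro sum_mono)
    fix x y
    have "c x * c y \<le> ((c x)\<^sup>2 + (c y)\<^sup>2) / 2"
      using sum_squares_bound[of "c x" "c y"] by (simp add: power2_eq_square)
    then show "(if R x y then c x * c y else 0)
        \<le> (if R x y then (c x)\<^sup>2 else 0) / 2 + (if R x y then (c y)\<^sup>2 else 0) / 2"
      by (simp add: add_divide_distrib)
  qed
  also have "\<dots> = (\<Sum>x\<in>A. \<Sum>y\<in>A. if R x y then (c x)\<^sup>2 else 0) / 2 + (\<Sum>x\<in>A. \<Sum>y\<in>A. if R x y then (c y)\<^sup>2 else 0) / 2"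
    by (simp add: sum.distrib sum_divide_distrib)
  also have "(\<Sum>x\<in>A. \<Sum>y\<in>A. if R x y then (c y)\<^sup>2 else 0) = (\<Sum>x\<in>A. \<Sum>y\<in>A. if R x y then (c x)\<^sup>2 else 0)"
    by (subst sum.swap) (simp add: sym)
  also have "(\<Sum>x\<in>A. \<Sum>y\<in>A. if R x y then (c x)\<^sup>2 else 0) = (\<Sum>x\<in>A. (c x)\<^sup>2 * real (card {y \<in> A. R x y}))"
    using \<open>finite A\<close> by (simp add: sum.inter_filter[symmetric] mult.commute)
  finally show ?thesis by simp
qed

lemma sum_square_congruent_pairs_le:
  fixes c :: "nat \<Rightarrow> real"
  assumes q: "q > 0"
  shows "(\<Sum>h<q. \<Sum>h'<q. if int q dvd (int h^2 - int h'^2) then c h * c h' else 0)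
     \<le> (\<Sum>d\<in>{d. 0 < d \<and> d dvd q}. real (gcd d (q div d)) * (\<Sum>h\<in>{h \<in> {..<q}. gcd d (q div d) dvd 2 * h}. (c h)\<^sup>2))"
proof -
  let ?D = "{d. 0 < d \<and> d dvd q}" and ?g = "\<lambda>d. gcd d (q div d)"
  have "(\<Sum>h<q. \<Sum>h'<q. if int q dvd (int h^2 - int h'^2) then c h * c h' else 0)
      \<le> (\<Sum>h<q. (c h)\<^sup>2 * real (card {h' \<in> {..<q}. int q dvd (int h^2 - int h'^2)}))"
    by (rule sum_symmetric_pairs_le) (auto simp: dvd_diff_commute)
  also have "\<dots> \<le> (\<Sum>h<q. (c h)\<^sup>2 * (\<Sum>d\<in>?D. if ?g d dvd 2 * h then real (?g d) else 0))"
    by (intro sum_mono mult_left_mono card_square_congruent_le q) simp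
  also have "\<dots> = (\<Sum>h<q. \<Sum>d\<in>?D. if ?g d dvd 2 * h then real (?g d) * (c h)\<^sup>2 else 0)"
    by (auto simp: sum_distrib_left intro!: sum.cong)
  also have "\<dots> = (\<Sum>d\<in>?D. \<Sum>h<q. if ?g d dvd 2 * h then real (?g d) * (c h)\<^sup>2 else 0)"
    by (rule sum.swap)
  also have "\<dots> = (\<Sum>d\<in>?D. real (?g d) * (\<Sum>h\<in>{h \<in> {..<q}. ?g d dvd 2 * h}. (c h)\<^sup>2))"
    by (simp add: sum.inter_filter[symmetric] sum_distrib_left)
  finally show ?thesis .
qed

lemma sum_dvd_double_le_sample_sum:
  fixes F :: "real \<Rightarrow> real" and g q :: nat
  assumes F: "\<And>t. 0 \<le> F t" and g: "g > 0" "g dvd q" and q: "q > 0"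
  shows "(\<Sum>h\<in>{h \<in> {..<q}. g dvd 2 * h}. F (real h / real q)) \<le> (\<Sum>j<2 * q div g. F (real j / real (2 * q div g)))"
proof -
  let ?S = "{h \<in> {..<q}. g dvd 2 * h}" and ?n = "2 * q div g" and ?i = "\<lambda>h. 2 * h div g"
  have "inj_on ?i ?S"
    by (rule inj_onI) (metis dvd_mult_div_cancel mem_Collect_eq mult_left_cancel zero_neq_numeral)
  have ratio: "real (?i h) / real ?n = real h / real q" if "h \<in> ?S" for h
    using that g by (simp add: real_of_nat_div dvd_mult field_simps)
  have "?i ` ?S \<subseteq> {..<?n}"
  proof
    fix j assume "j \<in> ?i ` ?S"
    then obtain h where h: "h \<in> ?S" "j = ?i h" by auto
    then have "real j / real ?n < 1" using ratio[OF h(1)] by simp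
    moreover have "0 < ?n" using g q by (auto simp: div_greater_zero_iff dest: dvd_imp_le)
    ultimately show "j \<in> {..<?n}" by (simp add: divide_less_eq)
  qed
  have "(\<Sum>h\<in>?S. F (real h / real q)) = (\<Sum>h\<in>?S. F (real (?i h) / real ?n))"
    using ratio by simp
  also have "\<dots> = (\<Sum>j\<in>?i ` ?S. F (real j / real ?n))"
    by (rule sum.reindex[OF \<open>inj_on ?i ?S\<close>, symmetric, unfolded comp_def])
  also have "\<dots> \<le> (\<Sum>j<?n. F (real j / real ?n))"
    by (rule sum_mono2[OF _ \<open>?i ` ?S \<subseteq> {..<?n}\<close>]) (auto intro: F)
  finally show ?thesis .
qed

lemma gcd_div_square_le:
  fixes d q :: nat
  assumes "d dvd q" "q > 0"
  shows "gcd d (q div d) * gcd d (q div d) \<le> q"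
proof -
  have "gcd d (q div d) * gcd d (q div d) dvd d * (q div d)" by (intro mult_dvd_mono) simp_all
  then show ?thesis using assms by (intro dvd_imp_le) auto
qed

lemma le_num_divisors_mult_totient:
  fixes q :: nat
  assumes q: "q > 0"
  shows "q \<le> num_divisors q * totient q"
proof -
  have D: "{d. d dvd q} = {d. 0 < d \<and> d dvd q}" using q by (auto intro: Nat.gr0I)
  have "q = (\<Sum>d | d dvd q. totient d)" by (rule totient_divisor_sum[symmetric])
  also have "\<dots> \<le> (\<Sum>d | d dvd q. totient q)"
    by (rule sum_mono) (use q in \<open>auto intro: totient_dvd_mono\<close>)
  also have "\<dots> = num_divisors q * totient q" unfolding num_divisors_def D by simp
  finally show ?thesis .
qed

lemma gcd_weighted_sample_sum_le:
  fixes F :: "real \<Rightarrow> real" and q d n0 :: nat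
  assumes F: "\<And>t. 0 \<le> F t" and q: "q > 0" and d: "d dvd q"
    and sample: "\<forall>n\<ge>n0. (\<Sum>j<n. F (real j / real n)) \<le> real n * M" and n0: "n0 * n0 \<le> q"
  shows "real (gcd d (q div d)) * (\<Sum>h\<in>{h \<in> {..<q}. gcd d (q div d) dvd 2 * h}. F (real h / real q))
    \<le> 2 * real q * M"
proof -
  define g where "g = gcd d (q div d)"
  define n where "n = 2 * q div g"
  have gpos: "g > 0" and gq: "g dvd q" using d q unfolding g_def by (auto intro: dvd_trans)
  have ng: "n * g = 2 * q" unfolding n_def using gq by simp
  \<comment> \<open>since g * g \<le> q, the number of sample points n = 2q/g satisfies n * n \<ge> q\<close>
  have "q * (g * g) \<le> (n * n) * (g * g)"
  proof -
    have "q * (g * g) \<le> (2 * q) * (2 * q)" using gcd_div_square_le[OF d q] unfolding g_def by simp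
    also have "\<dots> = (n * n) * (g * g)" using ng by (metis mult.assoc mult.commute)
    finally show ?thesis .
  qed
  then have "n0 * n0 \<le> n * n" using gpos n0 by simp
  then have "n0 \<le> n" using power2_le_imp_le[of n0 n] by (simp add: power2_eq_square)
  have "(\<Sum>h\<in>{h \<in> {..<q}. g dvd 2 * h}. F (real h / real q)) \<le> (\<Sum>j<n. F (real j / real n))"
    unfolding n_def by (rule sum_dvd_double_le_sample_sum[OF F gpos gq q])
  also have "\<dots> \<le> real n * M" using sample \<open>n0 \<le> n\<close> by simp
  finally have "real g * (\<Sum>h\<in>{h \<in> {..<q}. g dvd 2 * h}. F (real h / real q)) \<le> real g * (real n * M)"
    by (simp add: mult_left_mono)
  also have "\<dots> = 2 * real q * M" using ng by (metis mult.assoc mult.commute of_nat_mult of_nat_numeral)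
  finally show ?thesis unfolding g_def .
qed

lemma sum_norm_gsum_power2_le:
  fixes \<phi> :: "real \<Rightarrow> complex" and q n0 :: nat
  assumes q: "q > 0" and n0: "n0 * n0 \<le> q"
    and sample: "\<forall>n\<ge>n0. (\<Sum>j<n. (cmod (\<phi> (real j / real n)))\<^sup>2) \<le> real n * M"
  shows "(\<Sum>p\<in>{1..q}. (cmod (gsum \<phi> p q))\<^sup>2) \<le> 2 * real (num_divisors q) * (real q)\<^sup>2 * M"
proof -
  let ?D = "{d. 0 < d \<and> d dvd q}" and ?g = "\<lambda>d. gcd d (q div d)"
  let ?a = "\<lambda>h. \<phi> (real h / real q)" and ?R = "\<lambda>h h'. int q dvd (int h^2 - int h'^2)"
  let ?X = "\<Sum>p\<in>{1..q}. (cmod (gsum \<phi> p q))\<^sup>2"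
  have "?X = cmod (complex_of_real ?X)" by (subst norm_of_real) (simp add: sum_nonneg)
  also have "\<dots> = real q * cmod (\<Sum>h<q. \<Sum>h'<q. if ?R h h' then ?a h * cnj (?a h') else 0)"
    by (simp only: sum_norm_gsum_power2[OF q] norm_mult norm_of_nat)
  also have "\<dots> \<le> real q * (\<Sum>h<q. \<Sum>h'<q. if ?R h h' then cmod (?a h) * cmod (?a h') else 0)"
  proof (rule mult_left_mono)
    have "cmod (\<Sum>h<q. \<Sum>h'<q. if ?R h h' then ?a h * cnj (?a h') else 0)
        \<le> (\<Sum>h<q. \<Sum>h'<q. cmod (if ?R h h' then ?a h * cnj (?a h') else 0))"
      by (rule order_trans[OF norm_sum sum_mono[OF norm_sum]])
    then show "cmod (\<Sum>h<q. \<Sum>h'<q. if ?R h h' then ?a h * cnj (?a h') else 0)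
        \<le> (\<Sum>h<q. \<Sum>h'<q. if ?R h h' then cmod (?a h) * cmod (?a h') else 0)"
      by (simp add: if_distrib norm_mult cong: if_cong)
  qed simp
  also have "\<dots> \<le> real q * (\<Sum>d\<in>?D. real (?g d) * (\<Sum>h\<in>{h \<in> {..<q}. ?g d dvd 2 * h}. (cmod (?a h))\<^sup>2))"
    by (intro mult_left_mono sum_square_congruent_pairs_le q) simp
  also have "\<dots> \<le> real q * (\<Sum>d\<in>?D. 2 * real q * M)"
    using gcd_weighted_sample_sum_le[OF _ q _ sample n0] by (intro mult_left_mono sum_mono) auto
  also have "\<dots> = 2 * real (num_divisors q) * (real q)\<^sup>2 * M"
    by (simp add: num_divisors_def power2_eq_square)
  finally show ?thesis .
qed

lemma card_gsum_gt_le: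
  fixes \<phi> :: "real \<Rightarrow> complex" and q :: nat and K :: real
  assumes q: "q > 0" and K: "K \<ge> 0"
  shows "real (card {p \<in> units_mod q. cmod (gsum \<phi> p q) / sqrt (real q) > K}) * (K\<^sup>2 * real q)
    \<le> (\<Sum>p\<in>{1..q}. (cmod (gsum \<phi> p q))\<^sup>2)"
proof -
  let ?S = "{p \<in> units_mod q. cmod (gsum \<phi> p q) / sqrt (real q) > K}"
  have "real (card ?S) * (K\<^sup>2 * real q) = (\<Sum>p\<in>?S. (K * sqrt (real q))\<^sup>2)"
    by (simp add: power_mult_distrib)
  also have "\<dots> \<le> (\<Sum>p\<in>?S. (cmod (gsum \<phi> p q))\<^sup>2)"
    using q K by (intro sum_mono power_mono) (auto simp: field_simps)
  also have "\<dots> \<le> (\<Sum>p\<in>{1..q}. (cmod (gsum \<phi> p q))\<^sup>2)"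
    by (rule sum_mono2) (auto simp: units_mod_def)
  finally show ?thesis .
qed

lemma card_gsum_gt_div_totient_le:
  fixes \<phi> :: "real \<Rightarrow> complex" and q n0 N :: nat and K M :: real
  assumes q: "q > 0" and N: "num_divisors q \<le> N" and K: "K > 0" and M: "0 \<le> M"
    and n0: "n0 * n0 \<le> q" and sample: "\<forall>n\<ge>n0. (\<Sum>j<n. (cmod (\<phi> (real j / real n)))\<^sup>2) \<le> real n * M"
  shows "real (card {p \<in> units_mod q. cmod (gsum \<phi> p q) / sqrt (real q) > K}) / real (totient q)
     \<le> 2 * (real N)\<^sup>2 / K\<^sup>2 * M"
proof -
  let ?c = "real (card {p \<in> units_mod q. cmod (gsum \<phi> p q) / sqrt (real q) > K})"
  have "?c * K\<^sup>2 * real q \<le> 2 * real (num_divisors q) * (real q)\<^sup>2 * M"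
    using card_gsum_gt_le[OF q, of K \<phi>] sum_norm_gsum_power2_le[OF q n0 sample] K by (simp add: mult.assoc)
  also have "\<dots> \<le> 2 * real N * (real q)\<^sup>2 * M" using N M by (simp add: mult_right_mono)
  finally have "?c * K\<^sup>2 \<le> 2 * real N * real q * M" using q by (simp add: power2_eq_square)
  also have "\<dots> \<le> 2 * real N * (real N * real (totient q)) * M"
    using le_num_divisors_mult_totient[OF q] N M
    by (intro mult_right_mono mult_left_mono) (auto simp flip: of_nat_mult intro: order_trans)
  finally show ?thesis using K q by (simp add: field_simps power2_eq_square)
qed

lemma Limsup_card_gsum_gt_le:
  fixes \<phi> :: "real \<Rightarrow> complex" and N :: nat and K :: real
  assumes ri: "riemann_integrable_T \<phi>" and K: "K > 0"
  shows "Limsup (inf sequentially (principal {q. num_divisors q \<le> N}))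
       (\<lambda>q. ereal (real (card {p \<in> units_mod q. cmod (gsum \<phi> p q) / sqrt (real q) > K}) / real (totient q)))
     \<le> ereal (2 * (real N)\<^sup>2 / K\<^sup>2 * L2_norm_sq \<phi>)"
proof (rule ereal_le_epsilon2)
  fix e :: real assume e: "e > 0"
  define C where "C = 2 * (real N)\<^sup>2 / K\<^sup>2"
  define \<delta> where "\<delta> = e / (C + 1)"
  have C: "C \<ge> 0" by (simp add: C_def)
  then have \<delta>: "\<delta> > 0" and C\<delta>: "C * \<delta> \<le> e"
    using e by (simp_all add: \<delta>_def field_simps)
  have L: "0 \<le> L2_norm_sq \<phi>" by (rule riemann_integrable_T_L2_norm_sq(1)[OF ri])
  obtain n0 where n0: "\<forall>n\<ge>n0. (\<Sum>j<n. (cmod (\<phi> (real j / real n)))\<^sup>2) \<le> real n * (L2_norm_sq \<phi> + \<delta>)"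
    using riemann_integrable_T_L2_norm_sq(2)[OF ri \<delta>] by (auto simp: eventually_sequentially)
  have "eventually (\<lambda>q. ereal (real (card {p \<in> units_mod q. cmod (gsum \<phi> p q) / sqrt (real q) > K})
      / real (totient q)) \<le> ereal (C * L2_norm_sq \<phi> + e)) (inf sequentially (principal {q. num_divisors q \<le> N}))"
    unfolding eventually_inf_principal eventually_sequentially
  proof (intro exI[of _ "n0 * n0 + 1"] allI impI)
    fix q assume q: "n0 * n0 + 1 \<le> q" "q \<in> {q. num_divisors q \<le> N}"
    have "real (card {p \<in> units_mod q. cmod (gsum \<phi> p q) / sqrt (real q) > K}) / real (totient q)
        \<le> C * (L2_norm_sq \<phi> + \<delta>)"
      unfolding C_def using q L \<delta> by (intro card_gsum_gt_div_totient_le[OF _ _ K _ _ n0]) auto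
    also have "\<dots> \<le> C * L2_norm_sq \<phi> + e" using C\<delta> by (simp add: distrib_left)
    finally show "ereal (real (card {p \<in> units_mod q. cmod (gsum \<phi> p q) / sqrt (real q) > K})
      / real (totient q)) \<le> ereal (C * L2_norm_sq \<phi> + e)" by simp
  qed
  then show "Limsup (inf sequentially (principal {q. num_divisors q \<le> N}))
       (\<lambda>q. ereal (real (card {p \<in> units_mod q. cmod (gsum \<phi> p q) / sqrt (real q) > K}) / real (totient q)))
     \<le> ereal (2 * (real N)\<^sup>2 / K\<^sup>2 * L2_norm_sq \<phi>) + ereal e"
    unfolding C_def by (simp add: Limsup_bounded)
qed

theorem lemma6p1:
  fixes N :: nat
  assumes "N \<ge> 1"
  shows "\<forall>\<epsilon>>0. \<exists>K>0. \<forall>\<phi> :: real \<Rightarrow> complex. riemann_integrable_T \<phi> \<longrightarrow>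
     Limsup (inf sequentially (principal {q. num_divisors q \<le> N}))
       (\<lambda>q. ereal (real (card {p \<in> units_mod q. cmod (gsum \<phi> p q) / sqrt (real q) > K})
                    / real (totient q)))
     \<le> ereal (\<epsilon> * L2_norm_sq \<phi>)"
proof (intro allI impI)
  fix \<epsilon> :: real assume \<epsilon>: "\<epsilon> > 0"
  define K where "K = sqrt (2 * (real N)\<^sup>2 / \<epsilon> + 1)"
  have K: "K > 0" and "K\<^sup>2 = 2 * (real N)\<^sup>2 / \<epsilon> + 1"
    using \<epsilon> by (simp_all add: K_def add_nonneg_pos)
  then have "2 * (real N)\<^sup>2 / K\<^sup>2 \<le> \<epsilon>" using \<epsilon> by (simp add: field_simps)
  then have "ereal (2 * (real N)\<^sup>2 / K\<^sup>2 * L2_norm_sq \<phi>) \<le> ereal (\<epsilon> * L2_norm_sq \<phi>)"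
    if "riemann_integrable_T \<phi>" for \<phi>
    using mult_right_mono riemann_integrable_T_L2_norm_sq(1)[OF that] by (simp only: ereal_less_eq)
  then show "\<exists>K>0. \<forall>\<phi> :: real \<Rightarrow> complex. riemann_integrable_T \<phi> \<longrightarrow>
     Limsup (inf sequentially (principal {q. num_divisors q \<le> N}))
       (\<lambda>q. ereal (real (card {p \<in> units_mod q. cmod (gsum \<phi> p q) / sqrt (real q) > K})
                    / real (totient q)))
     \<le> ereal (\<epsilon> * L2_norm_sq \<phi>)"
    using K Limsup_card_gsum_gt_le by (blast intro: order_trans)
qed

end
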